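(* Let $\succeq$ be an inconsistency ranking on $\mathcal{A}$. Then $\succeq$ satisfies positive responsiveness (PR), invariance under inversion of preferences (IIP), homogeneous treatment of entities (HTE), scale invariance (SI), monotonicity (MON) and reducibility (RED) if and only if $\succeq$ equals the Koczkodaj inconsistency ranking $\succeq^K$. In other words, $\succeq^K$ satisfies all six properties, and it is the unique inconsistency ranking on $\mathcal{A}$ that does so.
   Context: A pairwise comparison matrix of size $n$ is a matrix $\mathbf{A}=[a_{ij}]\in\mathbb{R}^{n\times n}$ with all entries positive and $a_{ji}=1/a_{ij}$ for all $i,j$. Let $\mathcal{A}$ denote the set of all pairwise comparison matrices of all sizes $n\ge 3$. For $\mathbf{A}\in\mathcal{A}$ of size $n$ and $3\le m\le n$, a submatrix of $\mathbf{A}$ is a matrix $\mathbf{B}=[b_{ij}]$ of size $m$ with $b_{ij}=a_{\sigma(i)\sigma(j)}$ for some strictly increasing map $\sigma:\{1,\dots,m\}\to\{1,\dots,n\}$. A triad is a pairwise comparison matrix of size $3$; a triad of $\mathbf{A}$ is a submatrix of $\mathbf{A}$ of size $3$ (when $n=3$, $\mathbf{A}$ is its own unique triad). A triad $\mathbf{T}$ is written $\mathbf{T}=(t_1;t_2;t_3)$, meaning $t_{12}=t_1$, $t_{13}=t_2$, $t_{23}=t_3$ (the remaining entries are determined by reciprocity); $\mathbf{T}^\top$ denotes its transpose, i.e. the triad $(1/t_1;1/t_2;1/t_3)$. An inconsistency ranking is a complete and transitive binary relation $\succeq$ on $\mathcal{A}$ ($\mathbf{A}\succeq\mathbf{B}$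 is read "$\mathbf{A}$ is at most as inconsistent as $\mathbf{B}$"); $\mathbf{A}\sim\mathbf{B}$ means $\mathbf{A}\succeq\mathbf{B}$ and $\mathbf{B}\succeq\mathbf{A}$; $\mathbf{A}\succ\mathbf{B}$ means $\mathbf{A}\succeq\mathbf{B}$ and not $\mathbf{B}\succeq\mathbf{A}$; $\mathbf{A}\preceq\mathbf{B}$ means $\mathbf{B}\succeq\mathbf{A}$. For $\mathbf{A}=[a_{ij}]\in\mathcal{A}$ of size $n$ let $\mu(\mathbf{A})=\max_{1\le i<j<k\le n}\max\{a_{ij}a_{jk}/a_{ik},\ a_{ik}/(a_{ij}a_{jk})\}$. The Koczkodaj inconsistency ranking $\succeq^K$ is defined by $\mathbf{A}\succeq^K\mathbf{B}\iff\mu(\mathbf{A})\le\mu(\mathbf{B})$. Properties of an inconsistency ranking $\succeq$: (PR) for all $s_2,t_2\ge 1$: $(1;s_2;1)\succeq(1;t_2;1)\iff s_2\le t_2$. (IIP) $\mathbf{T}\sim\mathbf{T}^\top$ for every triad $\mathbf{T}$. (HTE) $(1;t_2;t_3)\sim(1;t_2/t_3;1)$ for all $t_2,t_3>0$. (SI) $(t_1;t_2;t_3)\sim(kt_1;k^2t_2;kt_3)$ for all $t_1,t_2,t_3>0$ and all $k>0$. (MON) $\mathbf{A}\preceq\mathbf{T}$ for every $\mathbf{A}\in\mathcal{A}$ and every triad $\mathbf{T}$ of $\mathbf{A}$. (RED) every $\mathbf{A}\in\mathcal{A}$ has a triad $\mathbf{T}$ with $\mathbf{A}\sim\mathbf{T}$.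 *)

theory Defs
  imports Complex_Main
begin

text \<open>A matrix of size n is represented as a pair (n, a) with a :: nat => nat => real;
  indices are 0-based (0..n-1); entries outside the index range are fixed to 0
  so that the representation is canonical.\<close>
type_synonym pcm = "nat \<times> (nat \<Rightarrow> nat \<Rightarrow> real)"

definition is_pcm :: "pcm \<Rightarrow> bool" where
  "is_pcm A \<longleftrightarrow> (let n = fst A; a = snd A in
     n \<ge> 3 \<and>
     (\<forall>i<n. \<forall>j<n. a i j > 0 \<and> a j i = 1 / a i j) \<and>
     (\<forall>i j. \<not> (i < n \<and> j < n) \<longrightarrow> a i j = 0))"

definition PCMs :: "pcm set" where
  "PCMs = {A. is_pcm A}"

definition triad :: "real \<Rightarrow> real \<Rightarrow> real \<Rightarrow> pcm" where
  "triad t1 t2 t3 = (3, (\<lambda>i j.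
     if i = 0 \<and> j = 0 then 1 else if i = 1 \<and> j = 1 then 1 else if i = 2 \<and> j = 2 then 1
     else if i = 0 \<and> j = 1 then t1 else if i = 1 \<and> j = 0 then 1 / t1
     else if i = 0 \<and> j = 2 then t2 else if i = 2 \<and> j = 0 then 1 / t2
     else if i = 1 \<and> j = 2 then t3 else if i = 2 \<and> j = 1 then 1 / t3
     else 0))"

definition submatrix :: "pcm \<Rightarrow> nat \<Rightarrow> (nat \<Rightarrow> nat) \<Rightarrow> pcm" where
  "submatrix A m \<sigma> = (m, (\<lambda>i j. if i < m \<and> j < m then snd A (\<sigma> i) (\<sigma> j) else 0))"

definition is_submatrix :: "pcm \<Rightarrow> pcm \<Rightarrow> bool" where
  "is_submatrix B A \<longleftrightarrow> (\<exists>m \<sigma>. 3 \<le> m \<and> m \<le> fst A \<and>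
      strict_mono_on {0..<m} \<sigma> \<and> (\<forall>i<m. \<sigma> i < fst A) \<and> B = submatrix A m \<sigma>)"

definition is_triad_of :: "pcm \<Rightarrow> pcm \<Rightarrow> bool" where
  "is_triad_of T A \<longleftrightarrow> is_submatrix T A \<and> fst T = 3"

definition kocz_mu :: "pcm \<Rightarrow> real" where
  "kocz_mu A = (let n = fst A; a = snd A in
     Max {max (a i j * a j k / a i k) (a i k / (a i j * a j k)) | i j k. i < j \<and> j < k \<and> k < n})"

definition koczkodaj_ranking :: "pcm \<Rightarrow> pcm \<Rightarrow> bool" where
  "koczkodaj_ranking A B \<longleftrightarrow> kocz_mu A \<le> kocz_mu B"

text \<open>An inconsistency ranking: complete and transitive relation on the set of PCMs.
  R A B reads "A is at most as inconsistent as B".\<close>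
definition inconsistency_ranking :: "(pcm \<Rightarrow> pcm \<Rightarrow> bool) \<Rightarrow> bool" where
  "inconsistency_ranking R \<longleftrightarrow>
     (\<forall>A\<in>PCMs. \<forall>B\<in>PCMs. R A B \<or> R B A) \<and>
     (\<forall>A\<in>PCMs. \<forall>B\<in>PCMs. \<forall>C\<in>PCMs. R A B \<longrightarrow> R B C \<longrightarrow> R A C)"

definition indiff :: "(pcm \<Rightarrow> pcm \<Rightarrow> bool) \<Rightarrow> pcm \<Rightarrow> pcm \<Rightarrow> bool" where
  "indiff R A B \<longleftrightarrow> R A B \<and> R B A"

definition prop_PR :: "(pcm \<Rightarrow> pcm \<Rightarrow> bool) \<Rightarrow> bool" where
  "prop_PR R \<longleftrightarrow> (\<forall>s2 t2::real. s2 \<ge> 1 \<longrightarrow> t2 \<ge> 1 \<longrightarrow>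
     (R (triad 1 s2 1) (triad 1 t2 1) \<longleftrightarrow> s2 \<le> t2))"

definition prop_IIP :: "(pcm \<Rightarrow> pcm \<Rightarrow> bool) \<Rightarrow> bool" where
  "prop_IIP R \<longleftrightarrow> (\<forall>t1 t2 t3::real. t1 > 0 \<longrightarrow> t2 > 0 \<longrightarrow> t3 > 0 \<longrightarrow>
     indiff R (triad t1 t2 t3) (triad (1/t1) (1/t2) (1/t3)))"

definition prop_HTE :: "(pcm \<Rightarrow> pcm \<Rightarrow> bool) \<Rightarrow> bool" where
  "prop_HTE R \<longleftrightarrow> (\<forall>t2 t3::real. t2 > 0 \<longrightarrow> t3 > 0 \<longrightarrow>
     indiff R (triad 1 t2 t3) (triad 1 (t2/t3) 1))"

definition prop_SI :: "(pcm \<Rightarrow> pcm \<Rightarrow> bool) \<Rightarrow> bool" where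
  "prop_SI R \<longleftrightarrow> (\<forall>t1 t2 t3 k::real. t1 > 0 \<longrightarrow> t2 > 0 \<longrightarrow> t3 > 0 \<longrightarrow> k > 0 \<longrightarrow>
     indiff R (triad t1 t2 t3) (triad (k*t1) (k^2*t2) (k*t3)))"

definition prop_MON :: "(pcm \<Rightarrow> pcm \<Rightarrow> bool) \<Rightarrow> bool" where
  "prop_MON R \<longleftrightarrow> (\<forall>A\<in>PCMs. \<forall>T. is_triad_of T A \<longrightarrow> R T A)"

definition prop_RED :: "(pcm \<Rightarrow> pcm \<Rightarrow> bool) \<Rightarrow> bool" where
  "prop_RED R \<longleftrightarrow> (\<forall>A\<in>PCMs. \<exists>T. is_triad_of T A \<and> indiff R A T)"

end

theory Submission imports Defs begin

text \<open>Every ranking satisfying IIP, HTE and SI puts each triad on a level with the canonical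
  triad (1; x; 1), where x \<ge> 1 is its Koczkodaj index, and PR orders these canonical triads
  by x. Reducibility and monotonicity then single out, among the triads of a matrix A, one whose
  index is the maximal one, i.e. the Koczkodaj index of A; so A is on a level with
  (1; \<mu>(A); 1) and R compares matrices by \<mu>. Conversely, \<mu> is invariant under the
  triad transformations of IIP, HTE and SI, and the maximum over all triads is attained,
  which gives MON and RED.\<close>

definition kocz_index :: "(nat \<Rightarrow> nat \<Rightarrow> real) \<Rightarrow> nat \<Rightarrow> nat \<Rightarrow> nat \<Rightarrow> real" where
  "kocz_index a i j k = max (a i j * a j k / a i k) (a i k / (a i j * a j k))"

definition kocz_indices :: "(nat \<Rightarrow> nat \<Rightarrow> real) \<Rightarrow> nat \<Rightarrow> real set" where
  "kocz_indices a n = {kocz_index a i j k | i j k. i < j \<and> j < k \<and> k < n}"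

lemma kocz_mu_eq_Max_kocz_indices: "kocz_mu A = Max (kocz_indices (snd A) (fst A))"
  by (simp add: kocz_mu_def kocz_indices_def kocz_index_def Let_def)

lemma finite_kocz_indices: "finite (kocz_indices a n)"
proof (rule finite_subset)
  show "kocz_indices a n \<subseteq> (\<lambda>(i, j, k). kocz_index a i j k) ` ({..<n} \<times> {..<n} \<times> {..<n})"
    unfolding kocz_indices_def
  proof safe
    fix i j k :: nat
    assume "i < j" "j < k" "k < n"
    then show "kocz_index a i j k \<in> (\<lambda>(i, j, k). kocz_index a i j k) ` ({..<n} \<times> {..<n} \<times> {..<n})"
      by (intro image_eqI[of _ _ "(i, j, k)"]) auto
  qed
qed simp

lemma kocz_index_le_kocz_mu:
  "i < j \<Longrightarrow> j < k \<Longrightarrow> k < fst A \<Longrightarrow> kocz_index (snd A) i j k \<le> kocz_mu A"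
  unfolding kocz_mu_eq_Max_kocz_indices
  by (rule Max_ge[OF finite_kocz_indices]) (auto simp: kocz_indices_def)

lemma kocz_mu_attained:
  assumes "fst A \<ge> 3"
  obtains i j k where "i < j" "j < k" "k < fst A" "kocz_mu A = kocz_index (snd A) i j k"
proof -
  have "kocz_indices (snd A) (fst A) \<noteq> {}"
    using assms by (force simp: kocz_indices_def)
  then have "kocz_mu A \<in> kocz_indices (snd A) (fst A)"
    unfolding kocz_mu_eq_Max_kocz_indices by (rule Max_in[OF finite_kocz_indices])
  with that show ?thesis by (auto simp: kocz_indices_def)
qed

lemma kocz_mu_size3:
  assumes "fst A = 3"
  shows "kocz_mu A = kocz_index (snd A) 0 1 2"
proof -
  obtain i j k where "i < j" "j < k" "k < fst A" "kocz_mu A = kocz_index (snd A) i j k"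
    using kocz_mu_attained[of A] assms by auto
  moreover from calculation have "i = 0" "j = 1" "k = 2"
    using assms by arith+
  ultimately show ?thesis by simp
qed

lemma kocz_mu_triad: "kocz_mu (triad t1 t2 t3) = max (t1 * t3 / t2) (t2 / (t1 * t3))"
  by (simp add: kocz_mu_size3 triad_def kocz_index_def)

lemma max_inverse_eq:
  assumes "(x::real) > 0"
  shows "max x (1 / x) = (if 1 \<le> x then x else 1 / x)"
proof (cases "1 \<le> x")
  case True
  then have "1 / x \<le> x" by (simp add: order_trans[of _ 1 x])
  with True show ?thesis by simp
next
  case False
  then have "x < 1 / x" using assms by (simp add: less_divide_eq_1 less_trans[of x 1])
  with False show ?thesis by simp
qed

lemma one_le_max_inverse: "(x::real) > 0 \<Longrightarrow> 1 \<le> max x (1 / x)"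
  by (simp add: max_inverse_eq le_divide_eq_1)

lemma PCMs_size: "A \<in> PCMs \<Longrightarrow> fst A \<ge> 3"
  by (simp add: PCMs_def is_pcm_def Let_def)

lemma PCMs_entries:
  assumes "A \<in> PCMs" "i < fst A" "j < fst A"
  shows "snd A i j > 0" "snd A j i = 1 / snd A i j"
  using assms unfolding PCMs_def is_pcm_def Let_def mem_Collect_eq by blast+

lemma PCMs_diag:
  assumes "A \<in> PCMs" "i < fst A"
  shows "snd A i i = 1"
proof -
  let ?x = "snd A i i"
  have "?x > 0" "?x = 1 / ?x"
    using PCMs_entries[OF assms assms(2)] by simp_all
  then have "?x * ?x = 1"
    by (metis less_irrefl nonzero_eq_divide_eq)
  then have "(?x - 1) * (?x + 1) = 0"
    by algebra
  with \<open>?x > 0\<close> show ?thesis by simp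
qed

lemma one_le_kocz_index:
  assumes "A \<in> PCMs" "i < fst A" "j < fst A" "k < fst A"
  shows "1 \<le> kocz_index (snd A) i j k"
proof -
  define x where "x = snd A i j * snd A j k / snd A i k"
  have "x > 0" using PCMs_entries(1) assms unfolding x_def by simp
  moreover have "kocz_index (snd A) i j k = max x (1 / x)"
    unfolding kocz_index_def x_def by simp
  ultimately show ?thesis using one_le_max_inverse by simp
qed

lemma one_le_kocz_mu:
  assumes "A \<in> PCMs"
  shows "1 \<le> kocz_mu A"
proof -
  obtain i j k where "i < j" "j < k" "k < fst A" "kocz_mu A = kocz_index (snd A) i j k"
    using kocz_mu_attained[of A] PCMs_size[OF assms] by auto
  then show ?thesis using one_le_kocz_index[OF assms] by simp
qed

lemma triad_in_PCMs: "t1 > 0 \<Longrightarrow> t2 > 0 \<Longrightarrow> t3 > 0 \<Longrightarrow> triad t1 t2 t3 \<in> PCMs"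
  by (auto simp: PCMs_def is_pcm_def triad_def Let_def less_Suc_eq numeral_3_eq_3)

lemma PCMs_size3_eq_triad:
  assumes "A \<in> PCMs" "fst A = 3"
  shows "A = triad (snd A 0 1) (snd A 0 2) (snd A 1 2)"
proof (rule prod_eqI)
  show "fst A = fst (triad (snd A 0 1) (snd A 0 2) (snd A 1 2))"
    using assms(2) by (simp add: triad_def)
  have outside: "snd A i j = 0" if "\<not> (i < 3 \<and> j < 3)" for i j
    using assms that by (simp add: PCMs_def is_pcm_def Let_def)
  show "snd A = snd (triad (snd A 0 1) (snd A 0 2) (snd A 1 2))"
  proof (intro ext)
    fix i j
    show "snd A i j = snd (triad (snd A 0 1) (snd A 0 2) (snd A 1 2)) i j"
    proof (cases "i < 3 \<and> j < 3")
      case True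
      then have "i \<in> {0, 1, 2}" "j \<in> {0, 1, 2}" by auto
      then show ?thesis
        using assms PCMs_diag[of A] PCMs_entries(2)[of A 0 1] PCMs_entries(2)[of A 0 2]
          PCMs_entries(2)[of A 1 2]
        by (auto simp: triad_def)
    next
      case False
      then show ?thesis using outside by (auto simp: triad_def)
    qed
  qed
qed

lemma submatrix_in_PCMs:
  assumes "A \<in> PCMs" "3 \<le> m" "\<forall>i<m. \<sigma> i < fst A"
  shows "submatrix A m \<sigma> \<in> PCMs"
  unfolding PCMs_def is_pcm_def Let_def submatrix_def
proof (simp add: assms(2), intro allI impI conjI)
  fix i j assume "i < m" "j < m"
  then show "snd A (\<sigma> i) (\<sigma> j) > 0" "snd A (\<sigma> j) (\<sigma> i) = 1 / snd A (\<sigma> i) (\<sigma> j)"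
    using PCMs_entries[OF assms(1)] assms(3) by blast+
qed

lemma is_triad_ofE:
  assumes "is_triad_of T A"
  obtains \<sigma> where "strict_mono_on {0..<3} \<sigma>" "\<forall>i<3. \<sigma> i < fst A" "T = submatrix A 3 \<sigma>"
  using assms by (auto simp: is_triad_of_def is_submatrix_def submatrix_def)

lemma triad_of_in_PCMs:
  assumes "A \<in> PCMs" "is_triad_of T A"
  shows "T \<in> PCMs" "fst T = 3"
  using assms(2) by (auto elim: is_triad_ofE intro: submatrix_in_PCMs[OF assms(1)]
      simp: submatrix_def)

lemma kocz_mu_triad_of:
  assumes "is_triad_of T A"
  obtains i j k where "i < j" "j < k" "k < fst A" "kocz_mu T = kocz_index (snd A) i j k"
proof -
  obtain \<sigma> where \<sigma>: "strict_mono_on {0..<3} \<sigma>" "\<forall>i<3. \<sigma> i < fst A" "T = submatrix A 3 \<sigma>"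
    using assms by (rule is_triad_ofE)
  have "\<sigma> 0 < \<sigma> 1" "\<sigma> 1 < \<sigma> 2"
    using \<sigma>(1) by (auto intro: strict_mono_onD)
  moreover have "kocz_mu T = kocz_index (snd A) (\<sigma> 0) (\<sigma> 1) (\<sigma> 2)"
    by (simp add: kocz_mu_size3 \<sigma>(3) submatrix_def kocz_index_def)
  ultimately show ?thesis
    using that \<sigma>(2) by simp
qed

lemma exists_triad_of:
  assumes "i < j" "j < k" "k < fst A"
  shows "\<exists>T. is_triad_of T A \<and> kocz_mu T = kocz_index (snd A) i j k"
proof -
  define \<sigma> where "\<sigma> x = (if x = 0 then i else if x = 1 then j else k)" for x :: nat
  have "strict_mono_on {0..<3} \<sigma>"
    using assms by (auto simp: strict_mono_on_def \<sigma>_def)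
  moreover have "\<forall>x<3. \<sigma> x < fst A" "3 \<le> fst A"
    using assms by (auto simp: \<sigma>_def)
  ultimately have "is_submatrix (submatrix A 3 \<sigma>) A"
    unfolding is_submatrix_def by blast
  then have "is_triad_of (submatrix A 3 \<sigma>) A"
    by (simp add: is_triad_of_def submatrix_def)
  moreover have "kocz_mu (submatrix A 3 \<sigma>) = kocz_index (snd A) i j k"
    by (simp add: kocz_mu_size3 submatrix_def kocz_index_def \<sigma>_def)
  ultimately show ?thesis by blast
qed

lemma kocz_mu_triad_of_le:
  assumes "is_triad_of T A"
  shows "kocz_mu T \<le> kocz_mu A"
proof -
  obtain i j k where "i < j" "j < k" "k < fst A" "kocz_mu T = kocz_index (snd A) i j k"
    using assms by (rule kocz_mu_triad_of)
  then show ?thesis using kocz_index_le_kocz_mu[of i j k A] by simp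
qed

lemma exists_triad_of_eq_kocz_mu:
  assumes "A \<in> PCMs"
  shows "\<exists>T. is_triad_of T A \<and> kocz_mu T = kocz_mu A"
proof -
  obtain i j k where "i < j" "j < k" "k < fst A" "kocz_mu A = kocz_index (snd A) i j k"
    using kocz_mu_attained[of A] PCMs_size[OF assms] by auto
  then show ?thesis using exists_triad_of[of i j k A] by auto
qed

lemma ranking_trans:
  "inconsistency_ranking R \<Longrightarrow> A \<in> PCMs \<Longrightarrow> B \<in> PCMs \<Longrightarrow> C \<in> PCMs \<Longrightarrow>
   R A B \<Longrightarrow> R B C \<Longrightarrow> R A C"
  unfolding inconsistency_ranking_def by blast

lemma indiff_trans:
  "inconsistency_ranking R \<Longrightarrow> A \<in> PCMs \<Longrightarrow> B \<in> PCMs \<Longrightarrow> C \<in> PCMs \<Longrightarrow>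
   indiff R A B \<Longrightarrow> indiff R B C \<Longrightarrow> indiff R A C"
  unfolding inconsistency_ranking_def indiff_def by blast

lemma ranking_compare_canonical:
  assumes R: "inconsistency_ranking R" and PR: "prop_PR R"
    and A: "A \<in> PCMs" "indiff R A (triad 1 x 1)" "1 \<le> x"
    and B: "B \<in> PCMs" "indiff R B (triad 1 y 1)" "1 \<le> y"
  shows "R A B \<longleftrightarrow> x \<le> y"
proof -
  have X: "triad 1 x 1 \<in> PCMs" and Y: "triad 1 y 1 \<in> PCMs"
    using A(3) B(3) by (simp_all add: triad_in_PCMs)
  have "R A B \<longleftrightarrow> R (triad 1 x 1) (triad 1 y 1)"
  proof
    assume "R A B"
    then have "R (triad 1 x 1) B"
      using ranking_trans[OF R X A(1) B(1)] A(2) by (simp add: indiff_def)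
    then show "R (triad 1 x 1) (triad 1 y 1)"
      using ranking_trans[OF R X B(1) Y] B(2) by (simp add: indiff_def)
  next
    assume "R (triad 1 x 1) (triad 1 y 1)"
    then have "R A (triad 1 y 1)"
      using ranking_trans[OF R A(1) X Y] A(2) by (simp add: indiff_def)
    then show "R A B"
      using ranking_trans[OF R A(1) Y B(1)] B(2) by (simp add: indiff_def)
  qed
  also have "\<dots> \<longleftrightarrow> x \<le> y"
    using PR A(3) B(3) unfolding prop_PR_def by blast
  finally show ?thesis .
qed

lemma indiff_triad_canonical:
  assumes R: "inconsistency_ranking R" and IIP: "prop_IIP R" and HTE: "prop_HTE R"
    and SI: "prop_SI R" and pos: "t1 > 0" "t2 > 0" "t3 > 0"
  shows "indiff R (triad t1 t2 t3) (triad 1 (kocz_mu (triad t1 t2 t3)) 1)"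
proof -
  define x where "x = t2 / (t1 * t3)"
  have x: "x > 0" using pos by (simp add: x_def)
  have "indiff R (triad t1 t2 t3) (triad ((1/t1) * t1) ((1/t1)^2 * t2) ((1/t1) * t3))"
    using SI pos unfolding prop_SI_def by (meson divide_pos_pos zero_less_one)
  moreover have "triad ((1/t1) * t1) ((1/t1)^2 * t2) ((1/t1) * t3) = triad 1 (t2 / t1^2) (t3 / t1)"
    using pos by (simp add: power2_eq_square)
  ultimately have scaled: "indiff R (triad t1 t2 t3) (triad 1 (t2 / t1^2) (t3 / t1))"
    by simp
  have "t2 / t1^2 > 0" "t3 / t1 > 0"
    using pos by simp_all
  then have "indiff R (triad 1 (t2 / t1^2) (t3 / t1)) (triad 1 ((t2 / t1^2) / (t3 / t1)) 1)"
    using HTE unfolding prop_HTE_def by blast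
  moreover have "(t2 / t1^2) / (t3 / t1) = x"
    using pos by (simp add: x_def field_simps power2_eq_square)
  ultimately have to_x: "indiff R (triad t1 t2 t3) (triad 1 x 1)"
    using indiff_trans[OF R _ _ _ scaled] pos x by (simp add: triad_in_PCMs)
  have "kocz_mu (triad t1 t2 t3) = max x (1 / x)"
    by (simp add: kocz_mu_triad x_def max.commute)
  then have mu: "kocz_mu (triad t1 t2 t3) = (if 1 \<le> x then x else 1 / x)"
    using max_inverse_eq[OF x] by simp
  show ?thesis
  proof (cases "1 \<le> x")
    case True
    with to_x mu show ?thesis by simp
  next
    case False
    have "indiff R (triad 1 x 1) (triad 1 (1 / x) 1)"
      using IIP x unfolding prop_IIP_def by (metis div_by_1 zero_less_one)
    then have "indiff R (triad t1 t2 t3) (triad 1 (1 / x) 1)"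
      using indiff_trans[OF R _ _ _ to_x] pos x by (simp add: triad_in_PCMs)
    with False mu show ?thesis by simp
  qed
qed

lemma indiff_size3_canonical:
  assumes R: "inconsistency_ranking R" and IIP: "prop_IIP R" and HTE: "prop_HTE R"
    and SI: "prop_SI R" and T: "T \<in> PCMs" "fst T = 3"
  shows "indiff R T (triad 1 (kocz_mu T) 1)"
proof -
  have "snd T 0 1 > 0" "snd T 0 2 > 0" "snd T 1 2 > 0"
    using PCMs_entries(1)[OF T(1)] T(2) by simp_all
  from indiff_triad_canonical[OF R IIP HTE SI this] show ?thesis
    by (simp only: PCMs_size3_eq_triad[OF T, symmetric])
qed

lemma indiff_canonical:
  assumes R: "inconsistency_ranking R" and PR: "prop_PR R" and IIP: "prop_IIP R"
    and HTE: "prop_HTE R" and SI: "prop_SI R" and MON: "prop_MON R" and RED: "prop_RED R"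
    and A: "A \<in> PCMs"
  shows "indiff R A (triad 1 (kocz_mu A) 1)"
proof -
  note canonical = indiff_size3_canonical[OF R IIP HTE SI]
  obtain T where T: "is_triad_of T A" "indiff R A T"
    using RED A unfolding prop_RED_def by blast
  obtain S where S: "is_triad_of S A" "kocz_mu S = kocz_mu A"
    using exists_triad_of_eq_kocz_mu[OF A] by blast
  have T': "T \<in> PCMs" "fst T = 3" and S': "S \<in> PCMs" "fst S = 3"
    using triad_of_in_PCMs[OF A T(1)] triad_of_in_PCMs[OF A S(1)] by auto
  \<comment> \<open>S \<succeq> A by MON and A \<sim> T by RED, so PR forces \<mu>(S) \<le> \<mu>(T) \<le> \<mu>(A) = \<mu>(S).\<close>
  have "R S A" using MON A S(1) unfolding prop_MON_def by blast
  then have "R S T" using ranking_trans[OF R S'(1) A T'(1)] T(2) by (simp add: indiff_def)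
  then have "kocz_mu S \<le> kocz_mu T"
    using ranking_compare_canonical[OF R PR S'(1) canonical[OF S'] _ T'(1) canonical[OF T']]
      one_le_kocz_mu S'(1) T'(1) by blast
  then have "kocz_mu T = kocz_mu A"
    using S(2) kocz_mu_triad_of_le[OF T(1)] by simp
  then show ?thesis
    using indiff_trans[OF R A T'(1) _ T(2) canonical[OF T']] one_le_kocz_mu[OF A]
    by (simp add: triad_in_PCMs)
qed

lemma axioms_imp_koczkodaj_ranking:
  assumes "inconsistency_ranking R"
    and "prop_PR R" "prop_IIP R" "prop_HTE R" "prop_SI R" "prop_MON R" "prop_RED R"
    and "A \<in> PCMs" "B \<in> PCMs"
  shows "R A B \<longleftrightarrow> koczkodaj_ranking A B"
  unfolding koczkodaj_ranking_def
  using assms by (intro ranking_compare_canonical indiff_canonical one_le_kocz_mu)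

lemma kocz_mu_triad_inverse:
  "t1 > 0 \<Longrightarrow> t2 > 0 \<Longrightarrow> t3 > 0 \<Longrightarrow> kocz_mu (triad (1/t1) (1/t2) (1/t3)) = kocz_mu (triad t1 t2 t3)"
  by (simp add: kocz_mu_triad field_simps max.commute)

lemma kocz_mu_triad_homogeneous:
  "t2 > 0 \<Longrightarrow> t3 > 0 \<Longrightarrow> kocz_mu (triad 1 (t2/t3) 1) = kocz_mu (triad 1 t2 t3)"
  by (simp add: kocz_mu_triad field_simps)

lemma kocz_mu_triad_scale:
  "t1 > 0 \<Longrightarrow> t2 > 0 \<Longrightarrow> t3 > 0 \<Longrightarrow> k > 0 \<Longrightarrow>
   kocz_mu (triad (k*t1) (k^2*t2) (k*t3)) = kocz_mu (triad t1 t2 t3)"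
  by (simp add: kocz_mu_triad field_simps power2_eq_square)

lemma kocz_mu_triad_1_t_1:
  assumes "t \<ge> 1"
  shows "kocz_mu (triad 1 t 1) = t"
proof -
  have "1 / t \<le> t"
    using assms by (simp add: order_trans[of _ 1 t])
  then show ?thesis by (simp add: kocz_mu_triad)
qed

lemma koczkodaj_ranking_satisfies_axioms:
  assumes K: "\<forall>A\<in>PCMs. \<forall>B\<in>PCMs. R A B \<longleftrightarrow> koczkodaj_ranking A B"
  shows "prop_PR R" "prop_IIP R" "prop_HTE R" "prop_SI R" "prop_MON R" "prop_RED R"
proof -
  have indiff_iff: "indiff R A B \<longleftrightarrow> kocz_mu A = kocz_mu B" if "A \<in> PCMs" "B \<in> PCMs" for A B
    using K that by (auto simp: indiff_def koczkodaj_ranking_def)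
  show "prop_PR R"
    using K by (simp add: prop_PR_def koczkodaj_ranking_def triad_in_PCMs kocz_mu_triad_1_t_1)
  show "prop_IIP R"
    by (simp add: prop_IIP_def indiff_iff triad_in_PCMs kocz_mu_triad_inverse)
  show "prop_HTE R"
    by (simp add: prop_HTE_def indiff_iff triad_in_PCMs kocz_mu_triad_homogeneous)
  show "prop_SI R"
    by (simp add: prop_SI_def indiff_iff triad_in_PCMs kocz_mu_triad_scale)
  show "prop_MON R"
    unfolding prop_MON_def
  proof (intro ballI allI impI)
    fix A T assume "A \<in> PCMs" "is_triad_of T A"
    then show "R T A"
      using K triad_of_in_PCMs(1) kocz_mu_triad_of_le by (simp add: koczkodaj_ranking_def)
  qed
  show "prop_RED R"
    unfolding prop_RED_def
  proof
    fix A assume A: "A \<in> PCMs"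
    obtain T where T: "is_triad_of T A" "kocz_mu T = kocz_mu A"
      using exists_triad_of_eq_kocz_mu[OF A] by blast
    then have "indiff R A T"
      using indiff_iff[OF A triad_of_in_PCMs(1)[OF A T(1)]] by simp
    with T(1) show "\<exists>T. is_triad_of T A \<and> indiff R A T" by blast
  qed
qed

theorem theorem1:
  assumes "inconsistency_ranking R"
  shows "(prop_PR R \<and> prop_IIP R \<and> prop_HTE R \<and> prop_SI R \<and> prop_MON R \<and> prop_RED R)
         \<longleftrightarrow> (\<forall>A\<in>PCMs. \<forall>B\<in>PCMs. R A B \<longleftrightarrow> koczkodaj_ranking A B)"
proof
  assume "prop_PR R \<and> prop_IIP R \<and> prop_HTE R \<and> prop_SI R \<and> prop_MON R \<and> prop_RED R"
  then show "\<forall>A\<in>PCMs. \<forall>B\<in>PCMs. R A B \<longleftrightarrow> koczkodaj_ranking A B"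
    using axioms_imp_koczkodaj_ranking[OF assms] by simp
next
  assume "\<forall>A\<in>PCMs. \<forall>B\<in>PCMs. R A B \<longleftrightarrow> koczkodaj_ranking A B"
  then show "prop_PR R \<and> prop_IIP R \<and> prop_HTE R \<and> prop_SI R \<and> prop_MON R \<and> prop_RED R"
    using koczkodaj_ranking_satisfies_axioms by simp
qed

end
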